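(* Let $\mathbb K$ be a naturally ordered positive semiring, let $\mathrm{q}_{\mathrm{path}}=\exists x\exists y\exists z\,(R(x;y)\wedge S(y;z))$ with $\Sigma$ the key constraints stating that the first attribute of $R$ and the first attribute of $S$ are keys. Then for every $\mathbb K$-database $\mathfrak D$ with active domain $D$, \[\mathrm{mCA}_{\mathbb K}(\mathrm{q}_{\mathrm{path}},\Sigma,\mathfrak D)=\sum_{a\in D}\ \min_{b\in D:\,R^{\mathfrak D}(a,b)\neq0}\Big(R^{\mathfrak D}(a,b)\times\min_{c\in D:\,S^{\mathfrak D}(b,c)\neq 0}S^{\mathfrak D}(b,c)\Big),\] with the convention $\min(\emptyset)=0$. Equivalently, this value is the value on $\mathfrak D$ of the $\mathcal L_{\mathbb K}$-sentence $\exists x\,\nabla_{R(x,y)}y.\big(R(x,y)\times\nabla_{S(y,z)}z.\,S(y,z)\big)$, where $\nabla_G$ denotes guarded minimization (minimum over the elements satisfying the guard with non-zero value, and $0$ if there are none).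
   Context: A commutative semiring $\mathbb K=(K,+,\times,0,1)$ is positive if $a+b=0$ implies $a=b=0$ and it has no zero divisors; naturally ordered if $a\le_{\mathbb K}b:\iff\exists c\,(a+c=b)$ is a total order; minima are w.r.t. $\le_{\mathbb K}$. A $\mathbb K$-database $\mathfrak D$ assigns to $R,S$ binary functions $R^{\mathfrak D},S^{\mathfrak D}:\mathrm A^2\to K$ with finite support; the active domain $D$ is the non-empty set of values occurring in tuples with non-zero annotation. $\mathfrak D'\subseteq\mathfrak D$ means supports are included and values agree on the support of $\mathfrak D'$. A repair of $\mathfrak D$ is a $\subseteq$-maximal $\mathfrak D'\subseteq\mathfrak D$ such that no two distinct tuples with non-zero annotation in $R^{\mathfrak D'}$ (resp. $S^{\mathfrak D'}$) share their first component. The value of a closed CQ $\exists\vec y(R_1(\vec z_1)\wedge\dots\wedge R_k(\vec z_k))$ on $\mathfrak D$ is $\sum_{\vec a\in D^{|\vec y|}}\prod_i R_i^{\mathfrak D}(\vec z_i[\vec a/\vec y])$, and $\mathrm{mCA}_{\mathbb K}(q,\Sigma,\mathfrak D)$ is the minimum of this value over all repairs of $\mathfrak D$. *)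

theory Defs
  imports Main
begin

definition nat_le :: "'k::comm_semiring_1 \<Rightarrow> 'k \<Rightarrow> bool" where
  "nat_le a b \<longleftrightarrow> (\<exists>c. a + c = b)"

definition positive_semiring :: "'k::comm_semiring_1 itself \<Rightarrow> bool" where
  "positive_semiring _ \<longleftrightarrow>
     (\<forall>a b::'k. a + b = 0 \<longrightarrow> a = 0 \<and> b = 0) \<and>
     (\<forall>a b::'k. a * b = 0 \<longrightarrow> a = 0 \<or> b = 0)"

text \<open>Naturally ordered: the natural preorder is a total order
  (reflexivity and transitivity hold automatically; we require antisymmetry and totality).\<close>
definition naturally_ordered :: "'k::comm_semiring_1 itself \<Rightarrow> bool" where
  "naturally_ordered _ \<longleftrightarrow>
     (\<forall>a b::'k. nat_le a b \<and> nat_le b a \<longrightarrow> a = b) \<and>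
     (\<forall>a b::'k. nat_le a b \<or> nat_le b a)"

definition kmin :: "'k::comm_semiring_1 set \<Rightarrow> 'k" where
  "kmin A = (if A = {} then 0 else (THE m. m \<in> A \<and> (\<forall>x\<in>A. nat_le m x)))"

definition supp :: "('a \<Rightarrow> 'a \<Rightarrow> 'k::zero) \<Rightarrow> ('a \<times> 'a) set" where
  "supp R = {(a, b). R a b \<noteq> 0}"

definition is_kdb :: "('a \<Rightarrow> 'a \<Rightarrow> 'k::zero) \<Rightarrow> ('a \<Rightarrow> 'a \<Rightarrow> 'k) \<Rightarrow> bool" where
  "is_kdb R S \<longleftrightarrow> finite (supp R) \<and> finite (supp S)"

definition adom :: "('a \<Rightarrow> 'a \<Rightarrow> 'k::zero) \<Rightarrow> ('a \<Rightarrow> 'a \<Rightarrow> 'k) \<Rightarrow> 'a set" where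
  "adom R S = {x. \<exists>y. R x y \<noteq> 0 \<or> R y x \<noteq> 0 \<or> S x y \<noteq> 0 \<or> S y x \<noteq> 0}"

definition subrel :: "('a \<Rightarrow> 'a \<Rightarrow> 'k::zero) \<Rightarrow> ('a \<Rightarrow> 'a \<Rightarrow> 'k) \<Rightarrow> bool" where
  "subrel R' R \<longleftrightarrow> supp R' \<subseteq> supp R \<and> (\<forall>(a, b)\<in>supp R'. R' a b = R a b)"

definition subdb :: "('a \<Rightarrow> 'a \<Rightarrow> 'k::zero) \<Rightarrow> ('a \<Rightarrow> 'a \<Rightarrow> 'k) \<Rightarrow>
    ('a \<Rightarrow> 'a \<Rightarrow> 'k) \<Rightarrow> ('a \<Rightarrow> 'a \<Rightarrow> 'k) \<Rightarrow> bool" where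
  "subdb R' S' R S \<longleftrightarrow> subrel R' R \<and> subrel S' S"

definition key_ok :: "('a \<Rightarrow> 'a \<Rightarrow> 'k::zero) \<Rightarrow> bool" where
  "key_ok R \<longleftrightarrow> (\<forall>a b b'. R a b \<noteq> 0 \<longrightarrow> R a b' \<noteq> 0 \<longrightarrow> b = b')"

definition satisfies_keys :: "('a \<Rightarrow> 'a \<Rightarrow> 'k::zero) \<Rightarrow> ('a \<Rightarrow> 'a \<Rightarrow> 'k) \<Rightarrow> bool" where
  "satisfies_keys R S \<longleftrightarrow> key_ok R \<and> key_ok S"

definition is_repair :: "('a \<Rightarrow> 'a \<Rightarrow> 'k::zero) \<Rightarrow> ('a \<Rightarrow> 'a \<Rightarrow> 'k) \<Rightarrow>
    ('a \<Rightarrow> 'a \<Rightarrow> 'k) \<Rightarrow> ('a \<Rightarrow> 'a \<Rightarrow> 'k) \<Rightarrow> bool" where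
  "is_repair R S R' S' \<longleftrightarrow>
     subdb R' S' R S \<and> satisfies_keys R' S' \<and>
     (\<forall>R'' S''. subdb R'' S'' R S \<and> satisfies_keys R'' S'' \<and> subdb R' S' R'' S''
        \<longrightarrow> R'' = R' \<and> S'' = S')"

definition qpath_val :: "('a \<Rightarrow> 'a \<Rightarrow> 'k::comm_semiring_1) \<Rightarrow> ('a \<Rightarrow> 'a \<Rightarrow> 'k) \<Rightarrow> 'k" where
  "qpath_val R S = (\<Sum>(x, y, z) \<in> adom R S \<times> adom R S \<times> adom R S. R x y * S y z)"

definition mCA_qpath :: "('a \<Rightarrow> 'a \<Rightarrow> 'k::comm_semiring_1) \<Rightarrow> ('a \<Rightarrow> 'a \<Rightarrow> 'k) \<Rightarrow> 'k" where
  "mCA_qpath R S = kmin {qpath_val R' S' | R' S'. is_repair R S R' S'}"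

end

theory Submission
  imports Defs
begin

text \<open>A repair keeps, for every key value a with some tuple, exactly one tuple R(a, f a) and,
  likewise, one tuple S(b, g b); so its value is the sum over a of R(a, f a) * S(f a, g (f a)).
  Since the natural order is compatible with + and *, each summand is at least the guarded minimum
  on the right-hand side, and choosing g to minimise every S(b, _) first and then f to minimise
  every R(a, b) * S(b, g b) attains all these bounds at once.\<close>

lemma nat_le_refl: "nat_le (a::'k::comm_semiring_1) a"
  unfolding nat_le_def by (rule exI[of _ 0]) simp

lemma nat_le_trans: "nat_le (a::'k::comm_semiring_1) b \<Longrightarrow> nat_le b c \<Longrightarrow> nat_le a c"
  unfolding nat_le_def by (metis add.assoc)

lemma nat_le_mult_left: "nat_le (a::'k::comm_semiring_1) b \<Longrightarrow> nat_le (c * a) (c * b)"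
  unfolding nat_le_def by (metis distrib_left)

lemma nat_le_add: "nat_le (a::'k::comm_semiring_1) b \<Longrightarrow> nat_le c d \<Longrightarrow> nat_le (a + c) (b + d)"
  unfolding nat_le_def by (metis add.assoc add.left_commute)

lemma nat_le_sum:
  assumes "\<And>x. x \<in> A \<Longrightarrow> nat_le (f x) (g x :: 'k::comm_semiring_1)"
  shows "nat_le (sum f A) (sum g A)"
  using assms
  by (induction A rule: infinite_finite_induct) (auto simp: nat_le_refl nat_le_add)

lemma kmin_eqI:
  assumes "naturally_ordered TYPE('k::comm_semiring_1)"
    and "m \<in> A" "\<And>x. x \<in> A \<Longrightarrow> nat_le m (x::'k)"
  shows "kmin A = m"
proof -
  have "(THE m. m \<in> A \<and> (\<forall>x\<in>A. nat_le m x)) = m"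
    by (rule the_equality) (use assms in \<open>auto simp: naturally_ordered_def\<close>)
  with assms(2) show ?thesis unfolding kmin_def by auto
qed

lemma kmin_least_attained:
  assumes no: "naturally_ordered TYPE('k::comm_semiring_1)"
    and "finite A" "A \<noteq> {}"
  shows "kmin A \<in> A \<and> (\<forall>x\<in>(A::'k set). nat_le (kmin A) x)"
proof -
  from assms(2,3) have "\<exists>m\<in>A. \<forall>x\<in>A. nat_le m x"
  proof (induction A rule: finite_ne_induct)
    case (singleton x) then show ?case by (simp add: nat_le_refl)
  next
    case (insert x F)
    then obtain m where "m \<in> F" "\<forall>y\<in>F. nat_le m y" by blast
    moreover have "nat_le m x \<or> nat_le x m" using no unfolding naturally_ordered_def by blast
    ultimately show ?case using nat_le_trans nat_le_refl by (metis insert_iff)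
  qed
  then show ?thesis using kmin_eqI[OF no] by metis
qed

lemma kmin_image_le:
  assumes "naturally_ordered TYPE('k::comm_semiring_1)" "finite D" "b \<in> D" "P b"
  shows "nat_le (kmin {h b | b. b \<in> D \<and> P b}) (h b :: 'k)"
  using kmin_least_attained[OF assms(1), of "{h b | b. b \<in> D \<and> P b}"] assms(2-4)
  by (auto simp: finite_image_set)

lemma kmin_image_attained:
  assumes "naturally_ordered TYPE('k::comm_semiring_1)" "finite D" "b \<in> D" "P b"
  shows "\<exists>b0. b0 \<in> D \<and> P b0 \<and> kmin {h b | b. b \<in> D \<and> P b} = (h b0 :: 'k)"
  using kmin_least_attained[OF assms(1), of "{h b | b. b \<in> D \<and> P b}"] assms(2-4)
  by (auto simp: finite_image_set)

lemma kmin_empty [simp]: "kmin {} = 0"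
  unfolding kmin_def by simp

lemma kmin_image_empty: "\<not> (\<exists>b. b \<in> D \<and> P b) \<Longrightarrow> kmin {h b | b. b \<in> D \<and> P b} = 0"
proof -
  assume "\<not> (\<exists>b. b \<in> D \<and> P b)"
  then have empty: "{h b | b. b \<in> D \<and> P b} = {}" by blast
  show ?thesis unfolding empty by (rule kmin_empty)
qed

lemma finite_adom: "is_kdb R S \<Longrightarrow> finite (adom R S)"
proof -
  have "adom R S \<subseteq> fst ` supp R \<union> snd ` supp R \<union> fst ` supp S \<union> snd ` supp S"
    unfolding adom_def supp_def by (force simp: image_iff)
  then show "is_kdb R S \<Longrightarrow> finite (adom R S)"
    unfolding is_kdb_def by (meson finite_UnI finite_imageI finite_subset)
qed

lemma adom_mono:
  assumes "\<And>a b. R' a b \<noteq> 0 \<Longrightarrow> R a b \<noteq> 0" "\<And>a b. S' a b \<noteq> 0 \<Longrightarrow> S a b \<noteq> 0"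
  shows "adom R' S' \<subseteq> adom R S"
  unfolding adom_def using assms by blast

lemma qpath_val_superset:
  assumes "finite D" "adom R S \<subseteq> D"
  shows "qpath_val R S = (\<Sum>x\<in>D. \<Sum>y\<in>D. \<Sum>z\<in>D. R x y * S y z)"
proof -
  have nz: "x \<in> adom R S \<and> y \<in> adom R S \<and> z \<in> adom R S" if "R x y * S y z \<noteq> 0" for x y z
  proof -
    from that have "R x y \<noteq> 0" "S y z \<noteq> 0" by auto
    then show ?thesis unfolding adom_def by blast
  qed
  have "qpath_val R S = (\<Sum>(x, y, z) \<in> D \<times> D \<times> D. R x y * S y z)"
    unfolding qpath_val_def
    by (rule sum.mono_neutral_left) (use assms nz in auto)
  then show ?thesis by (simp add: sum.cartesian_product case_prod_beta)
qed

definition key_repair :: "('a \<Rightarrow> 'a \<Rightarrow> 'k::zero) \<Rightarrow> ('a \<Rightarrow> 'a \<Rightarrow> 'k) \<Rightarrow> bool" where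
  "key_repair R R' \<longleftrightarrow> subrel R' R \<and> key_ok R' \<and>
     (\<forall>R''. subrel R'' R \<and> key_ok R'' \<and> subrel R' R'' \<longrightarrow> R'' = R')"

definition is_choice :: "('a \<Rightarrow> 'a \<Rightarrow> 'k::zero) \<Rightarrow> ('a \<Rightarrow> 'a) \<Rightarrow> bool" where
  "is_choice R f \<longleftrightarrow> (\<forall>a b. R a b \<noteq> 0 \<longrightarrow> R a (f a) \<noteq> 0)"

definition restrict_choice :: "('a \<Rightarrow> 'a \<Rightarrow> 'k::zero) \<Rightarrow> ('a \<Rightarrow> 'a) \<Rightarrow> 'a \<Rightarrow> 'a \<Rightarrow> 'k" where
  "restrict_choice R f a b = (if b = f a then R a b else 0)"

lemma subrel_refl: "subrel R R"
  unfolding subrel_def by simp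

lemma is_repair_iff_key_repair:
  "is_repair R S R' S' \<longleftrightarrow> key_repair R R' \<and> key_repair S S'"
proof
  assume rep: "is_repair R S R' S'"
  then have max: "R'' = R' \<and> S'' = S'"
    if "subrel R'' R" "subrel S'' S" "key_ok R''" "key_ok S''" "subrel R' R''" "subrel S' S''"
    for R'' S''
    using that unfolding is_repair_def subdb_def satisfies_keys_def by blast
  from rep have "subrel R' R" "subrel S' S" "key_ok R'" "key_ok S'"
    unfolding is_repair_def subdb_def satisfies_keys_def by blast+
  with max[of _ S'] max[of R'] show "key_repair R R' \<and> key_repair S S'"
    unfolding key_repair_def by (blast intro: subrel_refl)
next
  assume "key_repair R R' \<and> key_repair S S'"
  then show "is_repair R S R' S'"
    unfolding key_repair_def is_repair_def subdb_def satisfies_keys_def by blast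
qed

lemma key_repair_total:
  assumes rep: "key_repair R R'" and "R a b \<noteq> 0"
  shows "\<exists>y. R' a y \<noteq> 0"
proof (rule ccontr)
  assume none: "\<nexists>y. R' a y \<noteq> 0"
  define R'' where "R'' = R'(a := (\<lambda>y. if y = b then R a b else 0))"
  have sub: "subrel R' R" and key: "key_ok R'"
    using rep unfolding key_repair_def by blast+
  have "subrel R'' R"
    using sub assms(2) unfolding subrel_def supp_def R''_def by (auto split: if_splits)
  moreover have "key_ok R''"
    using key unfolding key_ok_def R''_def by auto
  moreover have "subrel R' R''"
    using none unfolding subrel_def supp_def R''_def by (auto split: if_splits)
  ultimately have "R'' = R'" using rep unfolding key_repair_def by blast
  moreover have "R'' a b = R a b" unfolding R''_def by simp
  ultimately show False using none assms(2) by simp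
qed

lemma restrict_choice_key_repair:
  assumes f: "is_choice R f"
  shows "key_repair R (restrict_choice R f)"
  unfolding key_repair_def
proof (intro conjI allI impI)
  show "subrel (restrict_choice R f) R" "key_ok (restrict_choice R f)"
    unfolding subrel_def key_ok_def supp_def restrict_choice_def by auto
  fix R'' assume "subrel R'' R \<and> key_ok R'' \<and> subrel (restrict_choice R f) R''"
  then have sub: "\<And>a b. R'' a b \<noteq> 0 \<Longrightarrow> R'' a b = R a b" and key: "key_ok R''"
    and sup: "\<And>a b. restrict_choice R f a b \<noteq> 0 \<Longrightarrow> R'' a b = restrict_choice R f a b"
    unfolding subrel_def supp_def by auto
  show "R'' = restrict_choice R f"
  proof (intro ext)
    fix a b
    show "R'' a b = restrict_choice R f a b"
    proof (cases "restrict_choice R f a b = 0")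
      case True
      show ?thesis
      proof (rule ccontr)
        assume "R'' a b \<noteq> restrict_choice R f a b"
        with True sub have Rab: "R'' a b \<noteq> 0" "R a b \<noteq> 0" by auto
        \<comment> \<open>R''(a, b) would clash on the key with the kept tuple R(a, f a)\<close>
        with f sup have "R'' a (f a) \<noteq> 0"
          unfolding is_choice_def restrict_choice_def by (metis (full_types))
        with Rab key have "b = f a" unfolding key_ok_def by blast
        with True Rab show False unfolding restrict_choice_def by simp
      qed
    qed (use sup in blast)
  qed
qed

lemma key_repair_iff_choice:
  "key_repair R R' \<longleftrightarrow> (\<exists>f. is_choice R f \<and> R' = restrict_choice R f)"
proof
  assume rep: "key_repair R R'"
  define f where "f a = (SOME y. R' a y \<noteq> 0)" for a
  have kept: "R' a (f a) \<noteq> 0" if "R a b \<noteq> 0" for a b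
    unfolding f_def using key_repair_total[OF rep that] by (rule someI_ex)
  have sub: "R' a b \<noteq> 0 \<Longrightarrow> R' a b = R a b" for a b
    using rep unfolding key_repair_def subrel_def supp_def by auto
  have key: "R' a b \<noteq> 0 \<Longrightarrow> R' a b' \<noteq> 0 \<Longrightarrow> b = b'" for a b b'
    using rep unfolding key_repair_def key_ok_def by blast
  have "is_choice R f"
    unfolding is_choice_def using kept sub by metis
  moreover have "R' a b = restrict_choice R f a b" for a b
    using kept[of a b] sub[of a b] key[of a b "f a"] unfolding restrict_choice_def
    by (cases "R' a b = 0") auto
  ultimately show "\<exists>f. is_choice R f \<and> R' = restrict_choice R f" by blast
qed (use restrict_choice_key_repair in blast)

lemma is_repair_iff_choice:
  "is_repair R S R' S' \<longleftrightarrow>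
     (\<exists>f g. is_choice R f \<and> is_choice S g \<and> R' = restrict_choice R f \<and> S' = restrict_choice S g)"
  unfolding is_repair_iff_key_repair key_repair_iff_choice by blast

lemma restrict_choice_nonzeroD: "restrict_choice R f a b \<noteq> 0 \<Longrightarrow> R a b \<noteq> 0"
  unfolding restrict_choice_def by (auto split: if_splits)

lemma sum_restrict_choice:
  assumes "finite D" "\<And>b. R a b \<noteq> 0 \<Longrightarrow> b \<in> D"
  shows "(\<Sum>b\<in>D. restrict_choice R f a b * h b) = R a (f a) * (h (f a) :: 'k::comm_semiring_1)"
proof -
  have "(\<Sum>b\<in>D. restrict_choice R f a b * h b) = (\<Sum>b\<in>D. if b = f a then R a (f a) * h (f a) else 0)"
    unfolding restrict_choice_def by (rule sum.cong) auto
  moreover have "f a \<notin> D \<Longrightarrow> R a (f a) = 0" using assms(2) by blast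
  ultimately show ?thesis using assms(1) by auto
qed

lemma qpath_val_restrict_choice:
  fixes R S :: "'a \<Rightarrow> 'a \<Rightarrow> 'k::comm_semiring_1"
  assumes "is_kdb R S"
  shows "qpath_val (restrict_choice R f) (restrict_choice S g) =
    (\<Sum>x\<in>adom R S. R x (f x) * S (f x) (g (f x)))"
proof -
  let ?D = "adom R S"
  have fin: "finite ?D" using finite_adom[OF assms] .
  have inD: "R a b \<noteq> 0 \<Longrightarrow> b \<in> ?D" "S a b \<noteq> 0 \<Longrightarrow> b \<in> ?D" for a b
    unfolding adom_def by blast+
  have S_sum: "(\<Sum>z\<in>?D. restrict_choice S g y z) = S y (g y)" for y
    using sum_restrict_choice[OF fin inD(2), where h = "\<lambda>_. 1"] by simp
  have "adom (restrict_choice R f) (restrict_choice S g) \<subseteq> ?D"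
    by (rule adom_mono) (erule restrict_choice_nonzeroD)+
  then have "qpath_val (restrict_choice R f) (restrict_choice S g) =
      (\<Sum>x\<in>?D. \<Sum>y\<in>?D. restrict_choice R f x y * (\<Sum>z\<in>?D. restrict_choice S g y z))"
    by (simp only: qpath_val_superset[OF fin] sum_distrib_left)
  also have "\<dots> = (\<Sum>x\<in>?D. R x (f x) * S (f x) (g (f x)))"
    by (simp only: S_sum sum_restrict_choice[OF fin inD(1)])
  finally show ?thesis .
qed

lemma choice_attaining_kmin:
  fixes w :: "'a \<Rightarrow> 'a \<Rightarrow> 'k::comm_semiring_1"
  assumes no: "naturally_ordered TYPE('k)"
    and fin: "finite D" and inD: "\<And>a b. R a b \<noteq> 0 \<Longrightarrow> b \<in> D"
  shows "\<exists>f. is_choice R f \<and>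
    (\<forall>a. (\<exists>b. R a b \<noteq> 0) \<longrightarrow> w a (f a) = kmin {w a b | b. b \<in> D \<and> R a b \<noteq> 0})"
proof -
  have "\<forall>a. \<exists>b0. (\<exists>b. R a b \<noteq> 0) \<longrightarrow>
      R a b0 \<noteq> 0 \<and> w a b0 = kmin {w a b | b. b \<in> D \<and> R a b \<noteq> 0}"
  proof
    fix a
    show "\<exists>b0. (\<exists>b. R a b \<noteq> 0) \<longrightarrow>
        R a b0 \<noteq> 0 \<and> w a b0 = kmin {w a b | b. b \<in> D \<and> R a b \<noteq> 0}"
    proof (cases "\<exists>b. R a b \<noteq> 0")
      case True
      then obtain b where b: "R a b \<noteq> 0" by blast
      have "\<exists>b0. b0 \<in> D \<and> R a b0 \<noteq> 0 \<and> kmin {w a b | b. b \<in> D \<and> R a b \<noteq> 0} = w a b0"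
        by (rule kmin_image_attained[OF no fin inD[OF b]]) (rule b)
      then show ?thesis by auto
    qed blast
  qed
  then obtain f where "\<forall>a. (\<exists>b. R a b \<noteq> 0) \<longrightarrow>
      R a (f a) \<noteq> 0 \<and> w a (f a) = kmin {w a b | b. b \<in> D \<and> R a b \<noteq> 0}"
    by (rule choice[THEN exE])
  then show ?thesis unfolding is_choice_def by blast
qed

lemma guarded_min_le_choice:
  assumes no: "naturally_ordered TYPE('k::comm_semiring_1)" and fin: "finite D"
    and inR: "\<And>a b. R a b \<noteq> 0 \<Longrightarrow> b \<in> D" and inS: "\<And>b c. S b c \<noteq> 0 \<Longrightarrow> c \<in> D"
    and f: "is_choice R f" and g: "is_choice S g"
  shows "nat_le (kmin {R a b * kmin {S b c | c. c \<in> D \<and> S b c \<noteq> 0} | b. b \<in> D \<and> R a b \<noteq> 0})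
                (R a (f a) * S (f a) (g (f a)) :: 'k)"
proof (cases "R a (f a) = 0")
  case True
  with f have "\<not> (\<exists>b. b \<in> D \<and> R a b \<noteq> 0)" unfolding is_choice_def by blast
  with True show ?thesis by (simp add: kmin_image_empty nat_le_refl)
next
  case False
  let ?b = "f a"
  let ?mS = "\<lambda>b. kmin {S b c | c. c \<in> D \<and> S b c \<noteq> 0}"
  have "nat_le (?mS ?b) (S ?b (g ?b))"
  proof (cases "S ?b (g ?b) = 0")
    case True
    with g have "\<not> (\<exists>c. c \<in> D \<and> S ?b c \<noteq> 0)" unfolding is_choice_def by blast
    with True show ?thesis by (simp add: kmin_image_empty nat_le_refl)
  next
    case False
    show ?thesis
      by (rule kmin_image_le[where P = "\<lambda>c. S ?b c \<noteq> 0", OF no fin inS[OF False] False])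
  qed
  then have "nat_le (R a ?b * ?mS ?b) (R a ?b * S ?b (g ?b))"
    by (rule nat_le_mult_left)
  moreover have "nat_le (kmin {R a b * ?mS b | b. b \<in> D \<and> R a b \<noteq> 0}) (R a ?b * ?mS ?b)"
    by (rule kmin_image_le[where P = "\<lambda>b. R a b \<noteq> 0", OF no fin inR[OF False] False])
  ultimately show ?thesis using nat_le_trans by blast
qed

lemma optimal_choices_exist:
  assumes no: "naturally_ordered TYPE('k::comm_semiring_1)" and fin: "finite D"
    and inR: "\<And>a b. R a b \<noteq> 0 \<Longrightarrow> b \<in> D" and inS: "\<And>b c. S b c \<noteq> 0 \<Longrightarrow> c \<in> D"
  shows "\<exists>f g. is_choice R f \<and> is_choice S g \<and> (\<forall>a. R a (f a) * S (f a) (g (f a)) =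
    kmin {R a b * kmin {S b c | c. c \<in> D \<and> S b c \<noteq> 0} | b. b \<in> D \<and> R a b \<noteq> (0::'k)})"
proof -
  define mS where "mS b = kmin {S b c | c. c \<in> D \<and> S b c \<noteq> 0}" for b
  have "\<exists>g. is_choice S g \<and> (\<forall>b. (\<exists>c. S b c \<noteq> 0) \<longrightarrow> S b (g b) = mS b)"
    unfolding mS_def by (rule choice_attaining_kmin[OF no fin]) (erule inS)
  then obtain g where g: "is_choice S g" "\<And>b. \<exists>c. S b c \<noteq> 0 \<Longrightarrow> S b (g b) = mS b"
    by blast
  have "\<exists>f. is_choice R f \<and> (\<forall>a. (\<exists>b. R a b \<noteq> 0) \<longrightarrow>
      R a (f a) * mS (f a) = kmin {R a b * mS b | b. b \<in> D \<and> R a b \<noteq> 0})"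
    by (rule choice_attaining_kmin[OF no fin]) (erule inR)
  then obtain f where f: "is_choice R f" "\<And>a. \<exists>b. R a b \<noteq> 0 \<Longrightarrow>
      R a (f a) * mS (f a) = kmin {R a b * mS b | b. b \<in> D \<and> R a b \<noteq> 0}"
    by blast
  have g_optimal: "S b (g b) = mS b" for b
  proof (cases "\<exists>c. S b c \<noteq> 0")
    case False
    then show ?thesis unfolding mS_def by (simp add: kmin_image_empty)
  qed (rule g(2))
  have "R a (f a) * S (f a) (g (f a)) = kmin {R a b * mS b | b. b \<in> D \<and> R a b \<noteq> 0}" for a
  proof (cases "\<exists>b. R a b \<noteq> 0")
    case False
    then show ?thesis by (simp add: kmin_image_empty)
  qed (simp add: g_optimal f(2))
  with f(1) g(1) show ?thesis unfolding mS_def by blast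
qed

theorem mainTheorem8:
  fixes R S :: "'a \<Rightarrow> 'a \<Rightarrow> 'k::comm_semiring_1"
  assumes "positive_semiring TYPE('k)"
    and "naturally_ordered TYPE('k)"
    and "is_kdb R S"
    and "adom R S \<noteq> {}"
  shows "mCA_qpath R S =
    (\<Sum>a \<in> adom R S. kmin {R a b * kmin {S b c | c. c \<in> adom R S \<and> S b c \<noteq> 0}
                             | b. b \<in> adom R S \<and> R a b \<noteq> 0})"
    (is "_ = (\<Sum>a \<in> ?D. ?T a)")
proof -
  have fin: "finite ?D" using finite_adom[OF assms(3)] .
  have inD: "R a b \<noteq> 0 \<Longrightarrow> b \<in> ?D" "S a b \<noteq> 0 \<Longrightarrow> b \<in> ?D" for a b
    unfolding adom_def by blast+
  have "\<exists>f g. is_choice R f \<and> is_choice S g \<and> (\<forall>a. R a (f a) * S (f a) (g (f a)) = ?T a)"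
    by (rule optimal_choices_exist[OF assms(2) fin]) (erule inD(1), erule inD(2))
  then obtain f g where "is_choice R f" "is_choice S g" "\<And>a. R a (f a) * S (f a) (g (f a)) = ?T a"
    by blast
  then have "qpath_val (restrict_choice R f) (restrict_choice S g) = (\<Sum>a \<in> ?D. ?T a)"
    and "is_repair R S (restrict_choice R f) (restrict_choice S g)"
    by (simp_all add: qpath_val_restrict_choice[OF assms(3)] is_repair_iff_choice, blast)
  moreover have "nat_le (\<Sum>a \<in> ?D. ?T a) (qpath_val R' S')" if "is_repair R S R' S'" for R' S'
  proof -
    from that obtain f' g' where f': "is_choice R f'" and g': "is_choice S g'"
      and "R' = restrict_choice R f'" "S' = restrict_choice S g'"
      unfolding is_repair_iff_choice by blast
    moreover have "nat_le (?T a) (R a (f' a) * S (f' a) (g' (f' a)))" for a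
      by (rule guarded_min_le_choice[OF assms(2) fin _ _ f' g']) (erule inD(1), erule inD(2))
    ultimately show ?thesis by (simp add: qpath_val_restrict_choice[OF assms(3)] nat_le_sum)
  qed
  ultimately show ?thesis
    unfolding mCA_qpath_def
    by (intro kmin_eqI[OF assms(2)]) (metis (mono_tags, lifting) mem_Collect_eq, blast)
qed

end
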